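(* Every finite graph is isomorphic to an induced subgraph of the commuting graph of some finite group. This group can be taken to be nilpotent of class $2$ and exponent $4$.
   Context: The commuting graph of a group $G$ has vertex set $G$, distinct $x,y$ adjacent iff $xy=yx$. *)

theory Defs
  imports "HOL-Algebra.Algebra"
begin

definition commuting_adj :: "('g, 'b) monoid_scheme \<Rightarrow> 'g \<Rightarrow> 'g \<Rightarrow> bool" where
  "commuting_adj G x y \<longleftrightarrow> x \<noteq> y \<and> x \<otimes>\<^bsub>G\<^esub> y = y \<otimes>\<^bsub>G\<^esub> x"

definition group_center :: "('g, 'b) monoid_scheme \<Rightarrow> 'g set" where
  "group_center G = {z \<in> carrier G. \<forall>x \<in> carrier G. z \<otimes>\<^bsub>G\<^esub> x = x \<otimes>\<^bsub>G\<^esub> z}"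

definition nilpotent_class_2 :: "('g, 'b) monoid_scheme \<Rightarrow> bool" where
  "nilpotent_class_2 G \<longleftrightarrow>
     derived G (carrier G) \<subseteq> group_center G \<and> derived G (carrier G) \<noteq> {\<one>\<^bsub>G\<^esub>}"

definition group_exponent :: "('g, 'b) monoid_scheme \<Rightarrow> nat" where
  "group_exponent G = (LEAST n. 0 < n \<and> (\<forall>x \<in> carrier G. x [^]\<^bsub>G\<^esub> n = \<one>\<^bsub>G\<^esub>))"

end

theory Submission
  imports Defs
begin

text \<open>Let \<open>Q\<close> be non-adjacency on an index set \<open>I\<close> containing the vertices. On pairs
  \<open>(a, c)\<close> with \<open>a \<in> \<bbbF>\<^sub>2\<^bsup>I\<^esup>\<close> and \<open>c \<in> \<bbbF>\<^sub>2\<^bsup>I \<times> I\<^esup>\<close> (encoded as subsets, with symmetric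
  difference as addition) put the product \<open>(a, c) (b, d) = (a + b, c + d + \<beta>(a, b))\<close>, where the
  bilinear form \<open>\<beta> = cocycle Q\<close> has \<open>\<beta>(e\<^sub>i, e\<^sub>j) = e\<^sub>i\<^sub>j\<close> if \<open>Q i j\<close> and \<open>0\<close> otherwise. Elements
  \<open>(0, c)\<close> are central and all commutators have this form, so the group has class at most 2;
  squares \<open>(a, c)\<^sup>2 = (0, \<beta>(a, a))\<close> are central of order at most 2, so the exponent divides 4. The
  commutator of the generators \<open>e\<^sub>i, e\<^sub>j\<close> is \<open>(0, \<beta>(e\<^sub>i, e\<^sub>j) + \<beta>(e\<^sub>j, e\<^sub>i))\<close>, which vanishes
  exactly when \<open>i\<close> and \<open>j\<close> are adjacent, so the generators span an induced copy of the graph.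
  Two extra isolated indices \<open>Inr b\<close> make the group non-abelian, which forces class exactly 2
  and exponent exactly 4: if also \<open>x\<^sup>m = 1\<close> for all \<open>x\<close> and some \<open>m < 4\<close>, all squares would be
  trivial, and a group of exponent 2 is abelian. Finally the group is transported to \<open>nat\<close> along
  an injection.\<close>

lemma (in group) subgroup_group_center: "subgroup (group_center G) G"
proof
  show "group_center G \<subseteq> carrier G" "\<one> \<in> group_center G"
    unfolding group_center_def by auto
next
  fix z w assume z: "z \<in> group_center G" and w: "w \<in> group_center G"
  have "z \<otimes> w \<otimes> x = x \<otimes> (z \<otimes> w)" if x: "x \<in> carrier G" for x
  proof -
    have zc: "z \<in> carrier G" and wc: "w \<in> carrier G"
      and zx: "z \<otimes> x = x \<otimes> z" and wx: "w \<otimes> x = x \<otimes> w"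
      using z w x unfolding group_center_def by auto
    have "z \<otimes> w \<otimes> x = z \<otimes> (x \<otimes> w)" using zc wc x by (simp add: m_assoc wx)
    also have "\<dots> = (x \<otimes> z) \<otimes> w" using zc wc x by (simp flip: m_assoc zx)
    also have "\<dots> = x \<otimes> (z \<otimes> w)" using zc wc x by (simp add: m_assoc)
    finally show ?thesis .
  qed
  moreover have "z \<otimes> w \<in> carrier G" using z w unfolding group_center_def by blast
  ultimately show "z \<otimes> w \<in> group_center G" unfolding group_center_def by blast
next
  fix z assume z: "z \<in> group_center G"
  have "inv z \<otimes> x = x \<otimes> inv z" if x: "x \<in> carrier G" for x
  proof -
    have zc: "z \<in> carrier G" and "z \<otimes> inv x = inv x \<otimes> z"
      using z x unfolding group_center_def by auto
    then have "inv (inv x \<otimes> z) = inv (z \<otimes> inv x)" by simp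
    then show ?thesis using zc x by (simp add: inv_mult_group)
  qed
  moreover have "inv z \<in> carrier G" using z unfolding group_center_def by blast
  ultimately show "inv z \<in> group_center G" unfolding group_center_def by blast
qed

lemma (in group) commutator_eq_one_iff:
  assumes "x \<in> carrier G" "y \<in> carrier G"
  shows "x \<otimes> y \<otimes> inv x \<otimes> inv y = \<one> \<longleftrightarrow> x \<otimes> y = y \<otimes> x"
  using assms by (simp add: inv_solve_right')

lemma (in group) nilpotent_class_2I:
  assumes central: "\<And>x y. x \<in> carrier G \<Longrightarrow> y \<in> carrier G \<Longrightarrow> x \<otimes> y \<otimes> inv x \<otimes> inv y \<in> group_center G"
    and x: "x \<in> carrier G" and y: "y \<in> carrier G" and noncomm: "x \<otimes> y \<noteq> y \<otimes> x"
  shows "nilpotent_class_2 G"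
proof -
  have "derived G (carrier G) \<subseteq> group_center G"
    unfolding derived_def using central by (intro generate_subgroup_incl subgroup_group_center) auto
  moreover have "x \<otimes> y \<otimes> inv x \<otimes> inv y \<in> derived G (carrier G)"
    unfolding derived_def using x y by (intro generate.incl) blast
  moreover have "x \<otimes> y \<otimes> inv x \<otimes> inv y \<noteq> \<one>"
    using commutator_eq_one_iff[OF x y] noncomm by simp
  ultimately show ?thesis unfolding nilpotent_class_2_def by blast
qed

lemma (in group) commute_if_squares_one:
  assumes sq: "\<And>z. z \<in> carrier G \<Longrightarrow> z \<otimes> z = \<one>" and x: "x \<in> carrier G" and y: "y \<in> carrier G"
  shows "x \<otimes> y = y \<otimes> x"
proof -
  have inv_self: "inv z = z" if "z \<in> carrier G" for z
    using inv_equality[OF sq] that by blast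
  have "x \<otimes> y = inv (x \<otimes> y)" using x y by (simp add: inv_self m_closed)
  also have "\<dots> = y \<otimes> x" by (simp only: inv_mult_group[OF x y] inv_self[OF x] inv_self[OF y])
  finally show ?thesis .
qed

lemma (in group) group_exponent_eq_4I:
  assumes pow4: "\<And>z. z \<in> carrier G \<Longrightarrow> z [^] (4::nat) = \<one>"
    and x: "x \<in> carrier G" and y: "y \<in> carrier G" and noncomm: "x \<otimes> y \<noteq> y \<otimes> x"
  shows "group_exponent G = 4"
  unfolding group_exponent_def
proof (rule Least_equality)
  show "0 < (4::nat) \<and> (\<forall>z\<in>carrier G. z [^] (4::nat) = \<one>)" using pow4 by simp
next
  fix m :: nat assume m: "0 < m \<and> (\<forall>z\<in>carrier G. z [^] m = \<one>)"
  show "4 \<le> m"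
  proof (rule ccontr)
    assume "\<not> 4 \<le> m"
    then have "m = 1 \<or> m = 2 \<or> m = 3" using m by auto
    then have "z \<otimes> z = \<one>" if z: "z \<in> carrier G" for z
    proof (elim disjE)
      assume "m = 1" then show ?thesis using m z by simp
    next
      assume "m = 2" then show ?thesis using m z by (simp add: numeral_2_eq_2)
    next
      assume "m = 3"
      then have "z = z [^] (3::nat) \<otimes> z" using m z by simp
      also have "\<dots> = \<one>" using pow4[OF z] by (simp add: numeral_3_eq_3 eval_nat_numeral)
      finally show ?thesis using z by simp
    qed
    then show False using commute_if_squares_one x y noncomm by blast
  qed
qed

lemma group_center_iso:
  assumes "group G" "group H" "\<phi> \<in> iso G H"
  shows "group_center H = \<phi> ` group_center G"
proof -
  interpret group_hom G H \<phi>
    using assms by (simp add: group_hom_def group_hom_axioms_def iso_imp_homomorphism)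
  have inj: "inj_on \<phi> (carrier G)" and onto: "\<phi> ` carrier G = carrier H"
    using assms(3) by (auto simp: iso_def bij_betw_def)
  have "\<phi> z \<in> group_center H \<longleftrightarrow> z \<in> group_center G" if z: "z \<in> carrier G" for z
  proof -
    have "\<phi> z \<otimes>\<^bsub>H\<^esub> \<phi> x = \<phi> x \<otimes>\<^bsub>H\<^esub> \<phi> z \<longleftrightarrow> z \<otimes>\<^bsub>G\<^esub> x = x \<otimes>\<^bsub>G\<^esub> z"
      if x: "x \<in> carrier G" for x
      using z x inj by (simp flip: hom_mult add: inj_on_eq_iff)
    then show ?thesis using z unfolding group_center_def onto[symmetric] by auto
  qed
  then show ?thesis unfolding group_center_def onto[symmetric] by auto
qed

lemma nilpotent_class_2_iso:
  assumes "group G" "group H" "\<phi> \<in> iso G H" "nilpotent_class_2 G"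
  shows "nilpotent_class_2 H"
proof -
  interpret group_hom G H \<phi>
    using assms by (simp add: group_hom_def group_hom_axioms_def iso_imp_homomorphism)
  have inj: "inj_on \<phi> (carrier G)" and onto: "\<phi> ` carrier G = carrier H"
    using assms(3) by (auto simp: iso_def bij_betw_def)
  have derived: "derived H (carrier H) = \<phi> ` derived G (carrier G)"
    using derived_img[of "carrier G"] onto by simp
  have "derived G (carrier G) \<subseteq> carrier G"
    by (simp add: G.derived_incl G.subgroup_self)
  then have "\<phi> ` derived G (carrier G) = \<phi> ` {\<one>\<^bsub>G\<^esub>} \<longleftrightarrow> derived G (carrier G) = {\<one>\<^bsub>G\<^esub>}"
    by (intro inj_on_image_eq_iff[OF inj]) auto
  then have "derived H (carrier H) \<noteq> {\<one>\<^bsub>H\<^esub>}"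
    using assms(4) derived unfolding nilpotent_class_2_def by simp
  then show ?thesis
    using assms(4) group_center_iso[OF assms(1-3)] derived
    unfolding nilpotent_class_2_def by auto
qed

lemma group_exponent_iso:
  assumes "group G" "group H" "\<phi> \<in> iso G H"
  shows "group_exponent H = group_exponent G"
proof -
  interpret group_hom G H \<phi>
    using assms by (simp add: group_hom_def group_hom_axioms_def iso_imp_homomorphism)
  have inj: "inj_on \<phi> (carrier G)" and onto: "\<phi> ` carrier G = carrier H"
    using assms(3) by (auto simp: iso_def bij_betw_def)
  have "x [^]\<^bsub>G\<^esub> n = \<one>\<^bsub>G\<^esub> \<longleftrightarrow> \<phi> x [^]\<^bsub>H\<^esub> n = \<one>\<^bsub>H\<^esub>"
    if "x \<in> carrier G" for x and n :: nat
    by (metis that G.nat_pow_closed G.one_closed hom_nat_pow hom_one inj_on_eq_iff inj)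
  then have "(\<forall>y\<in>carrier H. y [^]\<^bsub>H\<^esub> n = \<one>\<^bsub>H\<^esub>) \<longleftrightarrow> (\<forall>x\<in>carrier G. x [^]\<^bsub>G\<^esub> n = \<one>\<^bsub>G\<^esub>)"
    for n :: nat
    unfolding onto[symmetric] by auto
  then show ?thesis unfolding group_exponent_def by simp
qed

lemma commuting_adj_iso:
  assumes "monoid G" "\<phi> \<in> iso G H" "x \<in> carrier G" "y \<in> carrier G"
  shows "commuting_adj H (\<phi> x) (\<phi> y) \<longleftrightarrow> commuting_adj G x y"
proof -
  have inj: "inj_on \<phi> (carrier G)" and hom: "\<phi> \<in> hom G H"
    using assms(2) by (auto simp: iso_def bij_betw_def)
  have "\<phi> x \<otimes>\<^bsub>H\<^esub> \<phi> y = \<phi> y \<otimes>\<^bsub>H\<^esub> \<phi> x \<longleftrightarrow> x \<otimes>\<^bsub>G\<^esub> y = y \<otimes>\<^bsub>G\<^esub> x"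
    using assms(3,4) monoid.m_closed[OF assms(1)]
    by (simp add: hom_mult[OF hom, symmetric] inj_on_eq_iff[OF inj])
  then show ?thesis
    using assms(3,4) inj unfolding commuting_adj_def by (simp add: inj_on_eq_iff)
qed

definition transport :: "('a \<Rightarrow> 'b) \<Rightarrow> ('a, 'm) monoid_scheme \<Rightarrow> 'b monoid" where
  "transport h G =
     \<lparr>carrier = h ` carrier G,
      monoid.mult = \<lambda>x y. h (inv_into (carrier G) h x \<otimes>\<^bsub>G\<^esub> inv_into (carrier G) h y),
      monoid.one = h \<one>\<^bsub>G\<^esub>\<rparr>"

lemma iso_transport:
  assumes "inj_on h (carrier G)"
  shows "h \<in> iso G (transport h G)"
  using assms unfolding iso_def hom_def bij_betw_def transport_def
  by (auto simp: inv_into_f_f)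

lemma group_transport:
  assumes "group G" "inj_on h (carrier G)"
  shows "group (transport h G)"
proof -
  have "transport h G = (transport h G)\<lparr>carrier := h ` carrier G, one := h \<one>\<^bsub>G\<^esub>\<rparr>"
    by (simp add: transport_def)
  then show ?thesis
    using group.hom_imp_img_group[OF assms(1) iso_imp_homomorphism[OF iso_transport[OF assms(2)]]]
    by simp
qed

lemma finite_group_iso_nat_monoid:
  assumes "group G" "finite (carrier G)"
  obtains H :: "nat monoid" and h where "h \<in> iso G H" "group H" "finite (carrier H)"
proof -
  obtain h :: "'a \<Rightarrow> nat" where h: "inj_on h (carrier G)"
    using assms(2) by (meson finite_imp_inj_to_nat_seg)
  show thesis
    using that[OF iso_transport[OF h] group_transport[OF assms(1) h]] assms(2)
    by (simp add: transport_def)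
qed

definition cocycle :: "('i \<Rightarrow> 'i \<Rightarrow> bool) \<Rightarrow> 'i set \<Rightarrow> 'i set \<Rightarrow> ('i \<times> 'i) set" where
  "cocycle Q A B = {(i, j). i \<in> A \<and> j \<in> B \<and> Q i j}"

definition cocycle_group :: "('i \<Rightarrow> 'i \<Rightarrow> bool) \<Rightarrow> 'i set \<Rightarrow> ('i set \<times> ('i \<times> 'i) set) monoid" where
  "cocycle_group Q I =
     \<lparr>carrier = Pow I \<times> Pow (I \<times> I),
      monoid.mult = \<lambda>(A, C) (B, D). (sym_diff A B, sym_diff (sym_diff C D) (cocycle Q A B)),
      monoid.one = ({}, {})\<rparr>"

lemma cocycle_group_simps [simp]:
  "carrier (cocycle_group Q I) = Pow I \<times> Pow (I \<times> I)"
  "(A, C) \<otimes>\<^bsub>cocycle_group Q I\<^esub> (B, D) = (sym_diff A B, sym_diff (sym_diff C D) (cocycle Q A B))"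
  "\<one>\<^bsub>cocycle_group Q I\<^esub> = ({}, {})"
  by (simp_all add: cocycle_group_def)

lemma group_cocycle_group: "group (cocycle_group Q I)"
proof (rule groupI)
  fix x y z assume "x \<in> carrier (cocycle_group Q I)" "y \<in> carrier (cocycle_group Q I)"
    "z \<in> carrier (cocycle_group Q I)"
  then show "x \<otimes>\<^bsub>cocycle_group Q I\<^esub> y \<otimes>\<^bsub>cocycle_group Q I\<^esub> z =
      x \<otimes>\<^bsub>cocycle_group Q I\<^esub> (y \<otimes>\<^bsub>cocycle_group Q I\<^esub> z)"
    by (cases x; cases y; cases z) (auto simp: cocycle_def)
next
  fix x assume "x \<in> carrier (cocycle_group Q I)"
  then obtain A C where x: "x = (A, C)" "A \<subseteq> I" "C \<subseteq> I \<times> I" by auto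
  show "\<exists>y\<in>carrier (cocycle_group Q I). y \<otimes>\<^bsub>cocycle_group Q I\<^esub> x = \<one>\<^bsub>cocycle_group Q I\<^esub>"
    using x by (intro bexI[of _ "(A, sym_diff C (cocycle Q A A))"]) (auto simp: cocycle_def)
qed (auto simp: cocycle_def)

lemma cocycle_group_inv:
  assumes "A \<subseteq> I" "C \<subseteq> I \<times> I"
  shows "inv\<^bsub>cocycle_group Q I\<^esub> (A, C) = (A, sym_diff C (cocycle Q A A))"
  using assms by (intro group.inv_equality[OF group_cocycle_group]) (auto simp: cocycle_def)

lemma cocycle_group_pow_4:
  assumes "x \<in> carrier (cocycle_group Q I)"
  shows "x [^]\<^bsub>cocycle_group Q I\<^esub> (4::nat) = \<one>\<^bsub>cocycle_group Q I\<^esub>"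
  by (cases x) (auto simp: eval_nat_numeral cocycle_def)

lemma cocycle_group_center:
  assumes "C \<subseteq> I \<times> I"
  shows "({}, C) \<in> group_center (cocycle_group Q I)"
  using assms unfolding group_center_def by (auto simp: cocycle_def)

lemma cocycle_group_commutator_central:
  assumes "x \<in> carrier (cocycle_group Q I)" "y \<in> carrier (cocycle_group Q I)"
  shows "x \<otimes>\<^bsub>cocycle_group Q I\<^esub> y \<otimes>\<^bsub>cocycle_group Q I\<^esub> inv\<^bsub>cocycle_group Q I\<^esub> x
           \<otimes>\<^bsub>cocycle_group Q I\<^esub> inv\<^bsub>cocycle_group Q I\<^esub> y \<in> group_center (cocycle_group Q I)"
    (is "?c \<in> _")
proof -
  interpret group "cocycle_group Q I" by (rule group_cocycle_group)
  have "?c \<in> carrier (cocycle_group Q I)" by (intro m_closed inv_closed assms)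
  moreover have "fst ?c = {}"
    using assms by (cases x; cases y) (auto simp: cocycle_group_inv)
  ultimately show ?thesis by (cases ?c) (auto intro: cocycle_group_center)
qed

lemma commuting_adj_cocycle_group_generators:
  "commuting_adj (cocycle_group Q I) ({i}, {}) ({j}, {}) \<longleftrightarrow> i \<noteq> j \<and> \<not> Q i j \<and> \<not> Q j i"
  unfolding commuting_adj_def by (auto simp: cocycle_def)

lemma cocycle_group_generators_noncommute:
  assumes "i \<noteq> j" "Q i j"
  shows "({i}, {}) \<otimes>\<^bsub>cocycle_group Q I\<^esub> ({j}, {}) \<noteq> ({j}, {}) \<otimes>\<^bsub>cocycle_group Q I\<^esub> ({i}, {})"
  using assms by (auto simp: cocycle_def)

lemma nilpotent_class_2_cocycle_group:
  assumes "i \<in> I" "j \<in> I" "i \<noteq> j" "Q i j"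
  shows "nilpotent_class_2 (cocycle_group Q I)"
  using assms
  by (intro group.nilpotent_class_2I[OF group_cocycle_group cocycle_group_commutator_central
        _ _ cocycle_group_generators_noncommute]) auto

lemma group_exponent_cocycle_group:
  assumes "i \<in> I" "j \<in> I" "i \<noteq> j" "Q i j"
  shows "group_exponent (cocycle_group Q I) = 4"
  using assms
  by (intro group.group_exponent_eq_4I[OF group_cocycle_group cocycle_group_pow_4
        _ _ cocycle_group_generators_noncommute]) auto

definition graph_nonadj :: "('a \<Rightarrow> 'a \<Rightarrow> bool) \<Rightarrow> 'a + bool \<Rightarrow> 'a + bool \<Rightarrow> bool" where
  "graph_nonadj E i j \<longleftrightarrow> \<not> (\<exists>u v. i = Inl u \<and> j = Inl v \<and> E u v)"

lemma commuting_adj_cocycle_group_graph: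
  assumes "\<And>u v. E u v \<Longrightarrow> E v u" "\<And>u. \<not> E u u"
  shows "commuting_adj (cocycle_group (graph_nonadj E) I) ({Inl u}, {}) ({Inl v}, {}) \<longleftrightarrow> E u v"
  by (simp add: commuting_adj_cocycle_group_generators graph_nonadj_def) (use assms in blast)

theorem mainTheorem7:
  fixes V :: "'a set" and E :: "'a \<Rightarrow> 'a \<Rightarrow> bool"
  assumes "finite V"
    and "\<And>u v. E u v \<Longrightarrow> E v u"
    and "\<And>u. \<not> E u u"
  shows "\<exists>G :: nat monoid. group G \<and> finite (carrier G)
           \<and> nilpotent_class_2 G \<and> group_exponent G = 4
           \<and> (\<exists>f. f ` V \<subseteq> carrier G \<and> inj_on f V
                 \<and> (\<forall>u \<in> V. \<forall>v \<in> V. E u v \<longleftrightarrow> commuting_adj G (f u) (f v)))"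
proof -
  define I :: "('a + bool) set" where "I = Inl ` V \<union> range Inr"
  let ?G = "cocycle_group (graph_nonadj E) I"
  let ?e = "\<lambda>u. ({Inl u}, {}) :: ('a + bool) set \<times> (('a + bool) \<times> ('a + bool)) set"
  have G: "group ?G" "finite (carrier ?G)" "nilpotent_class_2 ?G" "group_exponent ?G = 4"
    using group_cocycle_group assms(1)
      nilpotent_class_2_cocycle_group[of "Inr False" I "Inr True"]
      group_exponent_cocycle_group[of "Inr False" I "Inr True"]
    by (simp_all add: I_def graph_nonadj_def)
  obtain H :: "nat monoid" and h where iso: "h \<in> iso ?G H" and H: "group H" "finite (carrier H)"
    using finite_group_iso_nat_monoid[OF G(1,2)] .
  have e: "?e ` V \<subseteq> carrier ?G" "inj_on ?e V"
    by (auto simp: I_def inj_on_def)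
  have adj: "commuting_adj ?G (?e u) (?e v) \<longleftrightarrow> E u v" for u v
    using assms(2,3) by (rule commuting_adj_cocycle_group_graph)
  have h: "h ` carrier ?G = carrier H" "inj_on h (carrier ?G)"
    using iso by (auto simp: iso_def bij_betw_def)
  show ?thesis
  proof (intro exI[of _ H] exI[of _ "h \<circ> ?e"] conjI)
    show "nilpotent_class_2 H" using nilpotent_class_2_iso[OF G(1) H(1) iso G(3)] .
    show "group_exponent H = 4" using group_exponent_iso[OF G(1) H(1) iso] G(4) by simp
    show "(h \<circ> ?e) ` V \<subseteq> carrier H" using image_mono[OF e(1), of h] h(1) by (simp add: image_comp)
    show "inj_on (h \<circ> ?e) V" using comp_inj_on[OF e(2) inj_on_subset[OF h(2) e(1)]] .
    show "\<forall>u\<in>V. \<forall>v\<in>V. E u v \<longleftrightarrow> commuting_adj H ((h \<circ> ?e) u) ((h \<circ> ?e) v)"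
    proof (intro ballI)
      fix u v assume "u \<in> V" "v \<in> V"
      then have "?e u \<in> carrier ?G" "?e v \<in> carrier ?G" using e(1) by blast+
      then show "E u v \<longleftrightarrow> commuting_adj H ((h \<circ> ?e) u) ((h \<circ> ?e) v)"
        by (simp only: comp_apply commuting_adj_iso[OF group.is_monoid[OF G(1)] iso] adj)
    qed
  qed (use H in auto)
qed

end
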